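(* Let $A$ be a commutative ring. There is a well-defined group homomorphism $\alpha:\mathrm{St}(2,A)\to C(A)$ with $\alpha(x_{21}(a))=y(a)$ and $\alpha(x_{12}(a))=\bar y(a)$ for all $a\in A$. Furthermore $\psi\circ\alpha=\phi$.
   Context: $C(A)$ is the group with generators $\epsilon(a)$, $a\in A$, and relations: with $h(u):=\epsilon(-u)\epsilon(-u^{-1})\epsilon(-u)$, (1) $h(u)h(v)=h(uv)$ ($u,v\in A^\times$); (2) $\epsilon(a)\epsilon(0)\epsilon(b)=h(-1)\epsilon(a+b)$; (3) $h(u)\epsilon(a)h(u)=\epsilon(u^2a)$. $y(a):=\epsilon(0)^3\epsilon(a)$ and $\bar y(a):=\epsilon(-a)\epsilon(0)^3$. $\psi:C(A)\to\mathrm{SL}_2(A)$ sends $\epsilon(a)\mapsto\begin{pmatrix}a&1\\-1&0\end{pmatrix}$. $\mathrm{St}(2,A)$ is the group generated by $x_{12}(t),x_{21}(t)$, $t\in A$, with relations $x_{ij}(s)x_{ij}(t)=x_{ij}(s+t)$ and $w_{ij}(u)x_{ij}(t)w_{ij}(-u)=x_{ji}(-u^{-2}t)$ for $u\in A^\times$, where $w_{ij}(u)=x_{ij}(u)x_{ji}(-u^{-1})x_{ij}(u)$. $\phi:\mathrm{St}(2,A)\to\mathrm{SL}_2(A)$ sends $x_{12}(t)\mapsto\begin{pmatrix}1&t\\0&1\end{pmatrix}$ and $x_{21}(t)\mapsto\begin{pmatrix}1&0\\t&1\end{pmatrix}$. *)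

theory Defs
  imports "HOL-Algebra.Group"
begin

text \<open>Words in generators and their formal inverses: (g, True) is g, (g, False) is g^-1.
  A presentation is given by a set R of pairs of words (l, r), meaning the relation l = r.\<close>

type_synonym 'g word = "('g \<times> bool) list"

inductive pres_eq :: "('g word \<times> 'g word) set \<Rightarrow> 'g word \<Rightarrow> 'g word \<Rightarrow> bool"
  for R where
  refl: "pres_eq R w w"
| sym: "pres_eq R v w \<Longrightarrow> pres_eq R w v"
| trans: "pres_eq R u v \<Longrightarrow> pres_eq R v w \<Longrightarrow> pres_eq R u w"
| cancel: "pres_eq R (u @ [(g, b), (g, \<not> b)] @ v) (u @ v)"
| rel: "(l, r) \<in> R \<Longrightarrow> pres_eq R (u @ l @ v) (u @ r @ v)"

definition pres_class :: "('g word \<times> 'g word) set \<Rightarrow> 'g word \<Rightarrow> 'g word set" where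
  "pres_class R w = {z. pres_eq R w z}"

definition presented_group :: "('g word \<times> 'g word) set \<Rightarrow> 'g word set monoid" where
  "presented_group R =
     \<lparr>carrier = range (pres_class R),
      mult = (\<lambda>X Y. {z. \<exists>x\<in>X. \<exists>y\<in>Y. pres_eq R (x @ y) z}),
      one = pres_class R []\<rparr>"

definition eval_word :: "('b, 'c) monoid_scheme \<Rightarrow> ('g \<Rightarrow> 'b) \<Rightarrow> 'g word \<Rightarrow> 'b" where
  "eval_word G f w =
     foldr (\<lambda>(g, b) acc. (if b then f g else inv\<^bsub>G\<^esub> (f g)) \<otimes>\<^bsub>G\<^esub> acc) w \<one>\<^bsub>G\<^esub>"

text \<open>The map on a presented group induced by an assignment of generators
  (the homomorphism, when it is well defined).\<close>
definition pres_lift :: "('b, 'c) monoid_scheme \<Rightarrow> ('g \<Rightarrow> 'b) \<Rightarrow> 'g word set \<Rightarrow> 'b" where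
  "pres_lift G f X = eval_word G f (SOME w. w \<in> X)"

definition unit_inv :: "'a::comm_ring_1 \<Rightarrow> 'a" where
  "unit_inv u = (THE v. u * v = 1)"

definition eps :: "'a \<Rightarrow> 'a word" where
  "eps a = [(a, True)]"

definition h_word :: "'a::comm_ring_1 \<Rightarrow> 'a word" where
  "h_word u = eps (- u) @ eps (- unit_inv u) @ eps (- u)"

definition C_rels :: "('a::comm_ring_1 word \<times> 'a word) set" where
  "C_rels =
     {(h_word u @ h_word v, h_word (u * v)) | u v. u dvd 1 \<and> v dvd 1}
   \<union> {(eps a @ eps 0 @ eps b, h_word (-1) @ eps (a + b)) | a b. True}
   \<union> {(h_word u @ eps a @ h_word u, eps (u\<^sup>2 * a)) | u a. u dvd 1}"

definition C_grp :: "'a::comm_ring_1 itself \<Rightarrow> 'a word set monoid" where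
  "C_grp _ = presented_group (C_rels :: ('a word \<times> 'a word) set)"

definition y_elt :: "'a::comm_ring_1 \<Rightarrow> 'a word set" where
  "y_elt a = pres_class C_rels (eps 0 @ eps 0 @ eps 0 @ eps a)"

definition ybar_elt :: "'a::comm_ring_1 \<Rightarrow> 'a word set" where
  "ybar_elt a = pres_class C_rels (eps (- a) @ eps 0 @ eps 0 @ eps 0)"

datatype 'a stgen = X12 'a | X21 'a

text \<open>x_ij(t) for (i,j) = (1,2) when the flag is True, (2,1) when False.\<close>
definition xw :: "bool \<Rightarrow> 'a \<Rightarrow> 'a stgen word" where
  "xw ij t = [(if ij then X12 t else X21 t, True)]"

definition ww :: "bool \<Rightarrow> 'a::comm_ring_1 \<Rightarrow> 'a stgen word" where
  "ww ij u = xw ij u @ xw (\<not> ij) (- unit_inv u) @ xw ij u"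

definition St_rels :: "('a::comm_ring_1 stgen word \<times> 'a stgen word) set" where
  "St_rels =
     {(xw ij s @ xw ij t, xw ij (s + t)) | ij s t. True}
   \<union> {(ww ij u @ xw ij t @ ww ij (- u), xw (\<not> ij) (- (unit_inv u)\<^sup>2 * t)) | ij u t. u dvd 1}"

definition St_grp :: "'a::comm_ring_1 itself \<Rightarrow> 'a stgen word set monoid" where
  "St_grp _ = presented_group (St_rels :: ('a stgen word \<times> 'a stgen word) set)"

text \<open>(a, b, c, d) represents the matrix [[a, b], [c, d]].\<close>
type_synonym 'a mat2 = "'a \<times> 'a \<times> 'a \<times> 'a"

definition mat2_mult :: "'a::comm_ring_1 mat2 \<Rightarrow> 'a mat2 \<Rightarrow> 'a mat2" where
  "mat2_mult M N = (case M of (a, b, c, d) \<Rightarrow> case N of (e, f, g, h) \<Rightarrow>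
     (a * e + b * g, a * f + b * h, c * e + d * g, c * f + d * h))"

definition SL2 :: "'a::comm_ring_1 itself \<Rightarrow> 'a mat2 monoid" where
  "SL2 _ = \<lparr>carrier = {(a, b, c, d). a * d - b * c = 1}, mult = mat2_mult, one = (1, 0, 0, 1)\<rparr>"

definition psi :: "'a::comm_ring_1 word set \<Rightarrow> 'a mat2" where
  "psi = pres_lift (SL2 TYPE('a)) (\<lambda>a. (a, 1, -1, 0))"

definition phi :: "'a::comm_ring_1 stgen word set \<Rightarrow> 'a mat2" where
  "phi = pres_lift (SL2 TYPE('a))
     (\<lambda>g. case g of X12 t \<Rightarrow> (1, t, 0, 1) | X21 t \<Rightarrow> (1, 0, t, 1))"

end

theory Submission
  imports Defs
begin

text \<open>
  The relations of C(A) make z = h(-1) a central involution with \<epsilon>(0)^2 = z, so that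
  \<epsilon>(0)^3 = \<epsilon>(0)^-1, y(a) = \<epsilon>(0)^-1 \<epsilon>(a) and ybar(a) = \<epsilon>(-a) \<epsilon>(0)^-1.
  Relation (2) then makes y and ybar additive. The Weyl elements are sent to
  w12(u) \<mapsto> h(-u) \<epsilon>(0)^-1 and w21(u) \<mapsto> \<epsilon>(0)^-1 h(u), and because h(u)^-1 = h(u^-1),
  relation (3) shows that conjugation by h(u) turns \<epsilon>(0)^-1 \<epsilon>(a) \<epsilon>(0)^-1 into
  \<epsilon>(0) \<epsilon>(u^-2 a) \<epsilon>(0); this gives the second Steinberg relation.

  All of this holds in any group with elements \<epsilon>(a) subject to (1)-(3). For C(A) itself it
  yields \<alpha>; for SL2(A) with \<epsilon>(a) \<mapsto> [[a, 1], [-1, 0]] it shows that \<psi> is a well-defined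
  homomorphism, and \<psi> \<circ> \<alpha> = \<phi> because both sides agree on the generators x_ij(t).
\<close>

section \<open>Presented groups\<close>

lemma pres_eq_context: "pres_eq R x y \<Longrightarrow> pres_eq R (p @ x @ q) (p @ y @ q)"
proof (induction rule: pres_eq.induct)
  case (sym v w)
  from sym.IH show ?case by (rule pres_eq.sym)
next
  case (trans u v w)
  from trans.IH show ?case by (rule pres_eq.trans)
next
  case (cancel u g b v)
  show ?case using pres_eq.cancel[of R "p @ u" g b "v @ q"] by simp
next
  case (rel l r u v)
  show ?case using pres_eq.rel[OF rel, of "p @ u" "v @ q"] by simp
qed (rule pres_eq.refl)

lemma pres_eq_append: "pres_eq R x x' \<Longrightarrow> pres_eq R y y' \<Longrightarrow> pres_eq R (x @ y) (x' @ y')"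
  using pres_eq_context[of R x x' "[]" y] pres_eq_context[of R y y' x' "[]"]
  by (auto intro: pres_eq.trans)

lemma pres_class_eq_iff: "pres_class R x = pres_class R y \<longleftrightarrow> pres_eq R x y"
  unfolding pres_class_def by (blast intro: pres_eq.refl pres_eq.sym pres_eq.trans)

lemma pres_class_rel: "(l, r) \<in> R \<Longrightarrow> pres_class R l = pres_class R r"
  using pres_eq.rel[of l r R "[]" "[]"] by (simp add: pres_class_eq_iff)

lemma presented_group_carrier: "carrier (presented_group R) = range (pres_class R)"
  by (simp add: presented_group_def)

lemma presented_group_one: "\<one>\<^bsub>presented_group R\<^esub> = pres_class R []"
  by (simp add: presented_group_def)

lemma presented_group_mult:
  "pres_class R x \<otimes>\<^bsub>presented_group R\<^esub> pres_class R y = pres_class R (x @ y)"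
  unfolding presented_group_def pres_class_def
  by (auto intro: pres_eq.refl pres_eq.sym pres_eq.trans pres_eq_append)

definition word_inv :: "'g word \<Rightarrow> 'g word" where
  "word_inv w = rev (map (\<lambda>(g, b). (g, \<not> b)) w)"

lemma pres_eq_word_inv_append: "pres_eq R (word_inv w @ w) []"
proof (induction w)
  case Nil
  then show ?case by (simp add: word_inv_def pres_eq.refl)
next
  case (Cons x w)
  obtain g b where x: "x = (g, b)" by force
  have "pres_eq R (word_inv w @ [(g, \<not> b), (g, \<not> \<not> b)] @ w) (word_inv w @ w)"
    by (rule pres_eq.cancel)
  then show ?case using Cons by (auto simp: x word_inv_def intro: pres_eq.trans)
qed

lemma group_presented_group: "group (presented_group R)"
proof (rule groupI)
  fix X assume "X \<in> carrier (presented_group R)"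
  then obtain x where X: "X = pres_class R x" by (auto simp: presented_group_carrier)
  have "pres_class R (word_inv x) \<otimes>\<^bsub>presented_group R\<^esub> X = \<one>\<^bsub>presented_group R\<^esub>"
    by (simp add: X presented_group_mult presented_group_one pres_class_eq_iff
        pres_eq_word_inv_append)
  then show "\<exists>Y\<in>carrier (presented_group R). Y \<otimes>\<^bsub>presented_group R\<^esub> X = \<one>\<^bsub>presented_group R\<^esub>"
    by (auto simp: presented_group_carrier)
qed (auto simp: presented_group_carrier presented_group_mult presented_group_one)

lemma eval_word_Nil [simp]: "eval_word G f [] = \<one>\<^bsub>G\<^esub>"
  by (simp add: eval_word_def)

lemma eval_word_Cons [simp]:
  "eval_word G f ((g, b) # w) = (if b then f g else inv\<^bsub>G\<^esub> f g) \<otimes>\<^bsub>G\<^esub> eval_word G f w"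
  by (simp add: eval_word_def)

context group
begin

lemma m_assoc_tail:
  "\<lbrakk>x \<otimes> y = z; x \<in> carrier G; y \<in> carrier G; w \<in> carrier G\<rbrakk> \<Longrightarrow> x \<otimes> (y \<otimes> w) = z \<otimes> w"
  by (simp add: m_assoc[symmetric])

lemma eval_word_closed [simp]: "(\<And>g. f g \<in> carrier G) \<Longrightarrow> eval_word G f w \<in> carrier G"
  by (induction w) auto

lemma eval_word_append:
  "(\<And>g. f g \<in> carrier G) \<Longrightarrow> eval_word G f (v @ w) = eval_word G f v \<otimes> eval_word G f w"
  by (induction v) (auto simp: m_assoc)

lemma eval_word_respects_pres_eq:
  assumes f: "\<And>g. f g \<in> carrier G"
    and R: "\<And>l r. (l, r) \<in> R \<Longrightarrow> eval_word G f l = eval_word G f r"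
  shows "pres_eq R v w \<Longrightarrow> eval_word G f v = eval_word G f w"
proof (induction rule: pres_eq.induct)
  case (cancel u g b v)
  have "eval_word G f [(g, b), (g, \<not> b)] = \<one>"
    using f by simp
  then show ?case using f by (simp only: eval_word_append) simp
next
  case (rel l r u v)
  then show ?case using f by (simp add: eval_word_append R)
qed auto

lemma pres_lift_class:
  assumes f: "\<And>g. f g \<in> carrier G"
    and R: "\<And>l r. (l, r) \<in> R \<Longrightarrow> eval_word G f l = eval_word G f r"
  shows "pres_lift G f (pres_class R w) = eval_word G f w"
proof -
  have "(SOME v. v \<in> pres_class R w) \<in> pres_class R w"
    by (rule someI[of _ w]) (simp add: pres_class_def pres_eq.refl)
  then show ?thesis
    unfolding pres_lift_def pres_class_def
    using eval_word_respects_pres_eq[OF f R] by (simp add: pres_eq.sym)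
qed

lemma pres_lift_hom:
  assumes f: "\<And>g. f g \<in> carrier G"
    and R: "\<And>l r. (l, r) \<in> R \<Longrightarrow> eval_word G f l = eval_word G f r"
  shows "pres_lift G f \<in> hom (presented_group R) G"
  using f by (auto simp: hom_def presented_group_carrier presented_group_mult
      pres_lift_class[OF f R] eval_word_append)

end

lemma (in group_hom) hom_eval_word:
  "(\<And>g. f g \<in> carrier G) \<Longrightarrow> h (eval_word G f w) = eval_word H (h \<circ> f) w"
  by (induction w) auto

section \<open>Groups with elements satisfying the relations of C(A)\<close>

lemma unit_inv_eqI: "(u::'a::comm_ring_1) * v = 1 \<Longrightarrow> unit_inv u = v"
  unfolding unit_inv_def
proof (rule the_equality)
  fix w assume "u * v = 1" "u * w = 1"
  then show "w = v" by (metis mult.assoc mult.commute mult_1_right)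
qed

lemma mult_unit_inv: "(u::'a::comm_ring_1) dvd 1 \<Longrightarrow> u * unit_inv u = 1"
  by (metis dvdE unit_inv_eqI)

locale C_generators = group G for G (structure) +
  fixes e :: "'a::comm_ring_1 \<Rightarrow> 'g"
  assumes e_closed [simp]: "e a \<in> carrier G"
begin

definition h :: "'a \<Rightarrow> 'g" where
  "h u = e (- u) \<otimes> e (- unit_inv u) \<otimes> e (- u)"

definition y :: "'a \<Rightarrow> 'g" where
  "y a = e 0 \<otimes> e 0 \<otimes> e 0 \<otimes> e a"

definition ybar :: "'a \<Rightarrow> 'g" where
  "ybar a = e (- a) \<otimes> e 0 \<otimes> e 0 \<otimes> e 0"

definition St_gen_image :: "'a stgen \<Rightarrow> 'g" where
  "St_gen_image g = (case g of X12 t \<Rightarrow> ybar t | X21 t \<Rightarrow> y t)"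

lemma h_closed [simp]: "h u \<in> carrier G"
  by (simp add: h_def)

lemma y_closed [simp]: "y a \<in> carrier G"
  by (simp add: y_def)

lemma ybar_closed [simp]: "ybar a \<in> carrier G"
  by (simp add: ybar_def)

lemma St_gen_image_closed [simp]: "St_gen_image g \<in> carrier G"
  by (simp add: St_gen_image_def split: stgen.split)

lemma h_eq: "u * v = 1 \<Longrightarrow> h u = e (- u) \<otimes> e (- v) \<otimes> e (- u)"
  by (simp add: h_def unit_inv_eqI)

lemma eval_word_eps: "eval_word G e (eps a) = e a"
  by (simp add: eps_def)

lemma eval_word_h_word: "eval_word G e (h_word u) = h u"
  by (simp add: h_word_def eps_def eval_word_append h_def m_assoc)

lemma eval_word_xw:
  "eval_word G St_gen_image (xw True t) = ybar t"
  "eval_word G St_gen_image (xw False t) = y t"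
  by (simp_all add: xw_def St_gen_image_def)

lemma eval_word_ww:
  "eval_word G St_gen_image (ww True u) = ybar u \<otimes> y (- unit_inv u) \<otimes> ybar u"
  "eval_word G St_gen_image (ww False u) = y u \<otimes> ybar (- unit_inv u) \<otimes> y u"
  by (simp_all add: ww_def eval_word_append eval_word_xw m_assoc)

end

locale C_relations = C_generators +
  assumes h_mult: "u dvd 1 \<Longrightarrow> v dvd 1 \<Longrightarrow> h u \<otimes> h v = h (u * v)"
    and e_zero_e: "e a \<otimes> e 0 \<otimes> e b = h (- 1) \<otimes> e (a + b)"
    and h_e_h: "u dvd 1 \<Longrightarrow> h u \<otimes> e a \<otimes> h u = e (u\<^sup>2 * a)"
begin

lemma h_mult_inverse: "u * v = 1 \<Longrightarrow> h u \<otimes> h v = \<one>"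
proof -
  assume uv: "u * v = 1"
  have "h 1 \<otimes> h 1 = h 1"
    using h_mult[of 1 1] by simp
  then have "h 1 = \<one>"
    by simp
  with uv show ?thesis
    using h_mult[of u v] by (metis dvd_triv_left dvd_triv_right)
qed

lemma h_neg_one_sq: "h (- 1) \<otimes> h (- 1) = \<one>"
  by (rule h_mult_inverse) simp

lemma h_uminus: "u dvd 1 \<Longrightarrow> h (- u) = h (- 1) \<otimes> h u"
  using h_mult[of "- 1" u] by simp

lemma e_zero_sq: "e 0 \<otimes> e 0 = h (- 1)"
  using e_zero_e[of 0 0] by (simp add: m_assoc[symmetric])

lemma h_neg_one_commute: "e a \<otimes> h (- 1) = h (- 1) \<otimes> e a"
proof -
  have "h (- 1) \<otimes> e a = h (- 1) \<otimes> e a \<otimes> h (- 1) \<otimes> h (- 1)"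
    by (simp add: m_assoc h_neg_one_sq)
  also have "\<dots> = e a \<otimes> h (- 1)"
    using h_e_h[of "- 1" a] by simp
  finally show ?thesis ..
qed

lemma inv_e_zero: "inv (e 0) = h (- 1) \<otimes> e 0"
  by (rule inv_equality) (simp_all add: m_assoc e_zero_sq h_neg_one_sq)

lemma y_eq: "y a = inv (e 0) \<otimes> e a"
  by (simp add: y_def inv_e_zero e_zero_sq)

lemma ybar_eq: "ybar a = e (- a) \<otimes> inv (e 0)"
  by (simp add: ybar_def inv_e_zero m_assoc e_zero_sq)

lemma h_neg_one_commute_assoc:
  "w \<in> carrier G \<Longrightarrow> e a \<otimes> (h (- 1) \<otimes> w) = h (- 1) \<otimes> (e a \<otimes> w)"
  by (simp add: m_assoc[symmetric] h_neg_one_commute)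

lemma h_neg_one_sq_assoc: "w \<in> carrier G \<Longrightarrow> h (- 1) \<otimes> (h (- 1) \<otimes> w) = w"
  by (simp add: m_assoc[symmetric] h_neg_one_sq)

lemma e_zero_sq_assoc: "w \<in> carrier G \<Longrightarrow> e 0 \<otimes> (e 0 \<otimes> w) = h (- 1) \<otimes> w"
  by (simp add: m_assoc[symmetric] e_zero_sq)

text \<open>These rules move each h(-1) to the left, where pairs of them cancel, and replace
  \<epsilon>(0) \<epsilon>(0) by h(-1); products of generators thereby reach a normal form.\<close>

lemmas h_neg_one_normalize = m_assoc inv_e_zero
  h_neg_one_commute h_neg_one_commute_assoc h_neg_one_sq h_neg_one_sq_assoc
  e_zero_sq e_zero_sq_assoc

lemma e_zero_e_assoc:
  "e a \<otimes> (e 0 \<otimes> e b) = h (- 1) \<otimes> e (a + b)"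
  "w \<in> carrier G \<Longrightarrow> e a \<otimes> (e 0 \<otimes> (e b \<otimes> w)) = h (- 1) \<otimes> (e (a + b) \<otimes> w)"
  by (simp_all add: m_assoc[symmetric] e_zero_e)

lemma y_add: "y s \<otimes> y t = y (s + t)"
  by (simp add: y_eq h_neg_one_normalize e_zero_e_assoc)

lemma ybar_add: "ybar s \<otimes> ybar t = ybar (s + t)"
  by (simp add: ybar_eq h_neg_one_normalize e_zero_e_assoc)

lemma w12_image: "u * v = 1 \<Longrightarrow> ybar u \<otimes> y (- v) \<otimes> ybar u = h (- u) \<otimes> inv (e 0)"
  using h_uminus[of u] h_eq[of u v]
  by (simp add: dvdI y_eq ybar_eq h_neg_one_normalize)

lemma w21_image: "u * v = 1 \<Longrightarrow> y u \<otimes> ybar (- v) \<otimes> y u = inv (e 0) \<otimes> h u"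
  using h_uminus[of "- u"] h_eq[of "- u" "- v"]
  by (simp add: dvdI y_eq ybar_eq h_neg_one_normalize)

lemma h_conj:
  assumes uv: "u * v = 1"
  shows "h u \<otimes> inv (e 0) \<otimes> e a \<otimes> inv (e 0) \<otimes> h u = e 0 \<otimes> e (v\<^sup>2 * a) \<otimes> e 0"
proof -
  have "h v \<otimes> h u = \<one>"
    using h_mult_inverse[of v u] uv by (simp add: mult.commute)
  from m_assoc_tail[OF this] m_assoc_tail[OF h_mult_inverse[OF uv]]
  have "h u \<otimes> inv (e 0) \<otimes> e a \<otimes> inv (e 0) \<otimes> h u =
      (h u \<otimes> e 0 \<otimes> h u) \<otimes> (h v \<otimes> e a \<otimes> h v) \<otimes> (h u \<otimes> e 0 \<otimes> h u)"
    by (simp add: h_neg_one_normalize)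
  also have "\<dots> = e 0 \<otimes> e (v\<^sup>2 * a) \<otimes> e 0"
    using uv h_e_h[of u 0] h_e_h[of v a] by (metis dvd_triv_left dvd_triv_right mult_zero_right)
  finally show ?thesis .
qed

lemma steinberg_rel_12:
  assumes uv: "u * v = 1"
  shows "(ybar u \<otimes> y (- v) \<otimes> ybar u) \<otimes> ybar t \<otimes> (ybar (- u) \<otimes> y v \<otimes> ybar (- u)) =
    y (- (v\<^sup>2) * t)"
proof -
  have w: "ybar u \<otimes> y (- v) \<otimes> ybar u = h (- 1) \<otimes> h u \<otimes> inv (e 0)"
    using w12_image[OF uv] h_uminus[of u] uv by (simp add: dvdI)
  have w': "ybar (- u) \<otimes> y v \<otimes> ybar (- u) = h u \<otimes> inv (e 0)"
    using w12_image[of "- u" "- v"] uv by simp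
  have "(ybar u \<otimes> y (- v) \<otimes> ybar u) \<otimes> ybar t \<otimes> (ybar (- u) \<otimes> y v \<otimes> ybar (- u)) =
      h (- 1) \<otimes> (h u \<otimes> inv (e 0) \<otimes> e (- t) \<otimes> inv (e 0) \<otimes> h u) \<otimes> inv (e 0)"
    by (simp only: w w') (simp add: ybar_eq m_assoc)
  also have "\<dots> = h (- 1) \<otimes> (e 0 \<otimes> e (v\<^sup>2 * - t) \<otimes> e 0) \<otimes> inv (e 0)"
    by (simp only: h_conj[OF uv])
  also have "\<dots> = y (- (v\<^sup>2) * t)"
    by (simp add: y_eq h_neg_one_normalize)
  finally show ?thesis .
qed

lemma steinberg_rel_21:
  assumes uv: "u * v = 1"
  shows "(y u \<otimes> ybar (- v) \<otimes> y u) \<otimes> y t \<otimes> (y (- u) \<otimes> ybar v \<otimes> y (- u)) =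
    ybar (- (v\<^sup>2) * t)"
proof -
  have w': "y (- u) \<otimes> ybar v \<otimes> y (- u) = inv (e 0) \<otimes> h u \<otimes> h (- 1)"
    using w21_image[of "- u" "- v"] h_mult[of u "- 1"] uv by (simp add: dvdI m_assoc)
  have "(y u \<otimes> ybar (- v) \<otimes> y u) \<otimes> y t \<otimes> (y (- u) \<otimes> ybar v \<otimes> y (- u)) =
      inv (e 0) \<otimes> (h u \<otimes> inv (e 0) \<otimes> e t \<otimes> inv (e 0) \<otimes> h u) \<otimes> h (- 1)"
    by (simp only: w21_image[OF uv] w') (simp add: y_eq m_assoc)
  also have "\<dots> = inv (e 0) \<otimes> (e 0 \<otimes> e (v\<^sup>2 * t) \<otimes> e 0) \<otimes> h (- 1)"
    by (simp only: h_conj[OF uv])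
  also have "\<dots> = ybar (- (v\<^sup>2) * t)"
    by (simp add: ybar_eq h_neg_one_normalize)
  finally show ?thesis .
qed

lemma eval_word_C_rels:
  "(l, r) \<in> C_rels \<Longrightarrow> eval_word G e l = eval_word G e r"
  by (auto simp: C_rels_def eval_word_append eval_word_eps eval_word_h_word h_mult)
    (simp_all add: m_assoc[symmetric] h_e_h e_zero_e)

lemma eval_word_St_rels:
  assumes "(l, r) \<in> St_rels"
  shows "eval_word G St_gen_image l = eval_word G St_gen_image r"
  using assms unfolding St_rels_def
proof (elim UnE CollectE exE conjE)
  fix ij s t
  assume "(l, r) = (xw ij s @ xw ij t, xw ij (s + t))"
  then show ?thesis
    by (cases ij) (simp_all add: eval_word_append eval_word_xw y_add ybar_add)
next
  fix ij u t
  assume "(l, r) = (ww ij u @ xw ij t @ ww ij (- u), xw (\<not> ij) (- (unit_inv u)\<^sup>2 * t))"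
    and "u dvd 1"
  define v where "v = unit_inv u"
  have l: "l = ww ij u @ xw ij t @ ww ij (- u)" and r: "r = xw (\<not> ij) (- v\<^sup>2 * t)"
    using \<open>(l, r) = _\<close> by (simp_all add: v_def)
  have uv: "u * v = 1"
    using \<open>u dvd 1\<close> by (simp add: v_def mult_unit_inv)
  then have inv_neg: "unit_inv (- u) = - v"
    by (simp add: unit_inv_eqI)
  show ?thesis
  proof (cases ij)
    case True
    have "eval_word G St_gen_image l =
        (ybar u \<otimes> y (- v) \<otimes> ybar u) \<otimes> ybar t \<otimes> (ybar (- u) \<otimes> y v \<otimes> ybar (- u))"
      by (simp only: l True eval_word_append St_gen_image_closed eval_word_xw eval_word_ww inv_neg
          minus_minus v_def[symmetric])
        (simp add: m_assoc)
    also have "\<dots> = eval_word G St_gen_image r"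
      by (simp add: steinberg_rel_12[OF uv] r True eval_word_xw)
    finally show ?thesis .
  next
    case False
    have "eval_word G St_gen_image l =
        (y u \<otimes> ybar (- v) \<otimes> y u) \<otimes> y t \<otimes> (y (- u) \<otimes> ybar v \<otimes> y (- u))"
      by (simp only: l False eval_word_append St_gen_image_closed eval_word_xw eval_word_ww inv_neg
          minus_minus v_def[symmetric])
        (simp add: m_assoc)
    also have "\<dots> = eval_word G St_gen_image r"
      by (simp add: steinberg_rel_21[OF uv] r False eval_word_xw)
    finally show ?thesis .
  qed
qed

end

section \<open>C(A), SL2(A) and the maps \<alpha> and \<psi>\<close>

lemma C_relations_C_grp: "C_relations (C_grp TYPE('a::comm_ring_1)) (\<lambda>a. pres_class C_rels (eps a))"
proof -
  interpret C_generators "C_grp TYPE('a)" "\<lambda>a. pres_class C_rels (eps a)"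
    by (simp add: C_generators_def C_generators_axioms_def C_grp_def group_presented_group
        presented_group_carrier)
  have mult: "pres_class C_rels x \<otimes>\<^bsub>C_grp TYPE('a)\<^esub> pres_class C_rels y = pres_class C_rels (x @ y)"
    for x y :: "'a word"
    by (simp add: C_grp_def presented_group_mult)
  have h: "h u = pres_class C_rels (h_word u)" for u
    by (simp add: h_def h_word_def mult)
  show ?thesis
    by (unfold_locales; simp only: h mult; rule pres_class_rel; auto simp: C_rels_def)
qed

lemma C_grp_y_ybar:
  "C_generators.y (C_grp TYPE('a::comm_ring_1)) (\<lambda>a. pres_class C_rels (eps a)) a = y_elt a"
  "C_generators.ybar (C_grp TYPE('a)) (\<lambda>a. pres_class C_rels (eps a)) a = ybar_elt a"
proof -
  interpret C_relations "C_grp TYPE('a)" "\<lambda>a. pres_class C_rels (eps a)"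
    by (rule C_relations_C_grp)
  show "y a = y_elt a" "ybar a = ybar_elt a"
    unfolding y_def ybar_def by (simp_all add: y_elt_def ybar_elt_def C_grp_def presented_group_mult)
qed

lemma mat2_mult_simp [simp]:
  "mat2_mult (a, b, c, d) (a', b', c', d') =
    (a * a' + b * c', a * b' + b * d', c * a' + d * c', c * b' + d * d')"
  by (simp add: mat2_mult_def)

lemma SL2_simps [simp]:
  "carrier (SL2 TYPE('a::comm_ring_1)) = {(a, b, c, d). a * d - b * c = 1}"
  "mult (SL2 TYPE('a)) = mat2_mult"
  "one (SL2 TYPE('a)) = (1, 0, 0, 1)"
  by (simp_all add: SL2_def)

lemma group_SL2: "group (SL2 TYPE('a::comm_ring_1))"
proof (rule groupI)
  fix x y :: "'a mat2"
  assume "x \<in> carrier (SL2 TYPE('a))" "y \<in> carrier (SL2 TYPE('a))"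
  moreover obtain a b c d where "x = (a, b, c, d)" by (cases x) auto
  moreover obtain a' b' c' d' where "y = (a', b', c', d')" by (cases y) auto
  moreover have "(a * a' + b * c') * (c * b' + d * d') - (a * b' + b * d') * (c * a' + d * c') =
      (a * d - b * c) * (a' * d' - b' * c')"
    by (simp add: algebra_simps)
  ultimately show "x \<otimes>\<^bsub>SL2 TYPE('a)\<^esub> y \<in> carrier (SL2 TYPE('a))"
    by simp
next
  fix x :: "'a mat2"
  assume x: "x \<in> carrier (SL2 TYPE('a))"
  obtain a b c d where xd: "x = (a, b, c, d)" by (cases x) auto
  have "(d, - b, - c, a) \<in> carrier (SL2 TYPE('a))"
    "(d, - b, - c, a) \<otimes>\<^bsub>SL2 TYPE('a)\<^esub> x = \<one>\<^bsub>SL2 TYPE('a)\<^esub>"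
    using x by (auto simp: xd algebra_simps)
  then show "\<exists>y\<in>carrier (SL2 TYPE('a)). y \<otimes>\<^bsub>SL2 TYPE('a)\<^esub> x = \<one>\<^bsub>SL2 TYPE('a)\<^esub>"
    by blast
qed (auto simp: algebra_simps)

lemma C_relations_SL2: "C_relations (SL2 TYPE('a::comm_ring_1)) (\<lambda>a. (a, 1, - 1, 0))"
proof -
  interpret C_generators "SL2 TYPE('a)" "\<lambda>a. (a, 1, - 1, 0)"
    by (simp add: C_generators_def C_generators_axioms_def group_SL2)
  have h: "h u = (u, 0, 0, v)" if "u * v = 1" for u v :: 'a
    using that by (simp add: h_eq algebra_simps)
  show ?thesis
  proof
    fix u v :: 'a
    assume "u dvd 1" "v dvd 1"
    then show "h u \<otimes>\<^bsub>SL2 TYPE('a)\<^esub> h v = h (u * v)"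
      using h[OF mult_unit_inv] h[of "u * v" "unit_inv u * unit_inv v"]
      by (simp add: mult_unit_inv algebra_simps)
  next
    fix a b :: 'a
    show "(a, 1, - 1, 0) \<otimes>\<^bsub>SL2 TYPE('a)\<^esub> (0, 1, - 1, 0) \<otimes>\<^bsub>SL2 TYPE('a)\<^esub> (b, 1, - 1, 0) =
        h (- 1) \<otimes>\<^bsub>SL2 TYPE('a)\<^esub> (a + b, 1, - 1, 0)"
      using h[of "- 1" "- 1"] by (simp add: algebra_simps)
  next
    fix u a :: 'a
    assume "u dvd 1"
    then show "h u \<otimes>\<^bsub>SL2 TYPE('a)\<^esub> (a, 1, - 1, 0) \<otimes>\<^bsub>SL2 TYPE('a)\<^esub> h u = (u\<^sup>2 * a, 1, - 1, 0)"
      using h[OF mult_unit_inv] by (simp add: mult_unit_inv power2_eq_square algebra_simps)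
  qed
qed

lemma psi_pres_class:
  "psi (pres_class C_rels w) = eval_word (SL2 TYPE('a::comm_ring_1)) (\<lambda>a. (a, 1, - 1, 0)) w"
proof -
  interpret C_relations "SL2 TYPE('a)" "\<lambda>a. (a, 1, - 1, 0)"
    by (rule C_relations_SL2)
  show ?thesis
    unfolding psi_def by (rule pres_lift_class) (simp_all add: eval_word_C_rels)
qed

lemma group_hom_psi: "group_hom (C_grp TYPE('a::comm_ring_1)) (SL2 TYPE('a)) psi"
proof -
  interpret C_relations "SL2 TYPE('a)" "\<lambda>a. (a, 1, - 1, 0)"
    by (rule C_relations_SL2)
  have "psi \<in> hom (C_grp TYPE('a)) (SL2 TYPE('a))"
    unfolding psi_def C_grp_def by (rule pres_lift_hom) (simp_all add: eval_word_C_rels)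
  then show ?thesis
    by (simp add: group_hom_def group_hom_axioms_def C_grp_def group_presented_group group_SL2)
qed

lemma psi_y_elt: "psi (y_elt a) = (1, 0, a, 1)"
  by (simp add: y_elt_def psi_pres_class eps_def)

lemma psi_ybar_elt: "psi (ybar_elt a) = (1, a, 0, 1)"
  by (simp add: ybar_elt_def psi_pres_class eps_def)

lemma psi_comp_St_gen_image:
  "psi \<circ> C_generators.St_gen_image (C_grp TYPE('a::comm_ring_1)) (\<lambda>a. pres_class C_rels (eps a)) =
    (\<lambda>g. case g of X12 t \<Rightarrow> (1, t, 0, 1) | X21 t \<Rightarrow> (1, 0, t, 1))"
proof -
  interpret C_relations "C_grp TYPE('a)" "\<lambda>a. pres_class C_rels (eps a)"
    by (rule C_relations_C_grp)
  show ?thesis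
    by (auto simp: St_gen_image_def C_grp_y_ybar psi_y_elt psi_ybar_elt split: stgen.split)
qed

theorem propositionA10:
  shows "\<exists>\<alpha>. \<alpha> \<in> hom (St_grp TYPE('a::comm_ring_1)) (C_grp TYPE('a))
            \<and> (\<forall>a. \<alpha> (pres_class St_rels (xw False a)) = y_elt a)
            \<and> (\<forall>a. \<alpha> (pres_class St_rels (xw True a)) = ybar_elt a)
            \<and> (\<forall>g \<in> carrier (St_grp TYPE('a)). psi (\<alpha> g) = phi g)"
proof -
  interpret C: C_relations "C_grp TYPE('a)" "\<lambda>a. pres_class C_rels (eps a)"
    by (rule C_relations_C_grp)
  define \<alpha> where "\<alpha> = pres_lift (C_grp TYPE('a)) C.St_gen_image"
  have "\<alpha> \<in> hom (St_grp TYPE('a)) (C_grp TYPE('a))"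
    unfolding \<alpha>_def St_grp_def
    by (rule C.pres_lift_hom[OF C.St_gen_image_closed C.eval_word_St_rels])
  moreover have "\<alpha> (pres_class St_rels w) = eval_word (C_grp TYPE('a)) C.St_gen_image w" for w
    unfolding \<alpha>_def
    by (rule C.pres_lift_class[OF C.St_gen_image_closed C.eval_word_St_rels])
  then have "\<alpha> (pres_class St_rels (xw False a)) = y_elt a"
    and "\<alpha> (pres_class St_rels (xw True a)) = ybar_elt a" for a
    by (simp_all add: xw_def C.St_gen_image_def flip: C_grp_y_ybar)
  moreover have "psi (\<alpha> g) = phi g" for g
    \<comment> \<open>both sides evaluate the same representative word SOME w. w \<in> g\<close>
    unfolding \<alpha>_def pres_lift_def phi_def
    by (simp add: group_hom.hom_eval_word[OF group_hom_psi] psi_comp_St_gen_image)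
  ultimately show ?thesis
    by blast
qed

end
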